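(* Let $m$ be a positive integer, $\xi\in\mathbb Z_m$, $\Gamma=\widetilde{BS}(m,\xi)$, $n\ge1$ and $t_1,\dots,t_n\in\{0,\dots,m-1\}$. For integers $c,u_1,\dots,u_n$ let $$w(c,u_1,\dots,u_n)=a^{n+1}\,(ce_0)\,a^{-1}\,(-u_1e_0)\,a^{-1}\,(-u_2e_0)\,a^{-1}\cdots(-u_ne_0)\,a^{-1}\in\Gamma,$$ where $(ke_0)$ denotes the $k$-th power of $e_0$. The following are equivalent: (i) $w(m,t_1,\dots,t_n)\in E$; (ii) $w(m,t_1,\dots,t_n)\,e_0\,w(-m,-t_1,\dots,-t_n)\,e_0^{-1}=1$ in $\Gamma$; (iii) $t_i=r_i(\xi)$ for every $1\le i\le n$.
   Context: $\mathbb Z_m$ is the ring of $m$-adic integers. The functions $r_i$: $r_0(\xi)=0$, $s_0(\xi)=1$, and for $i\ge1$, $r_i(\xi)\in\{0,\dots,m-1\}$, $s_i(\xi)\in\mathbb Z_m$ unique with $\xi s_{i-1}(\xi)=ms_i(\xi)+r_i(\xi)$. Let $E$ be the free abelian group with basis $e_0,e_1,\dots$ (written additively), $E_{m,\xi}\le E$ with basis $me_0,\ e_i-r_i(\xi)e_0$ ($i\ge1$), $E_1\le E$ with basis $e_1,e_2,\dots$, and $\phi:E_{m,\xi}\to E_1$ the isomorphism $\phi(me_0)=e_1$, $\phi(e_i-r_i(\xi)e_0)=e_{i+1}$. $\widetilde{BS}(m,\xi)=\langle E,a\mid axa^{-1}=\phi(x)\ \forall x\in E_{m,\xi}\rangle$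 (HNN extension), with $E$ viewed as a subgroup. *)

theory Defs
  imports Main
begin

text \<open>An m-adic integer is represented by its compatible system of residues:
  x k is the residue of x modulo m^k, in the range 0 ..< m^k.\<close>

definition madic :: "nat \<Rightarrow> (nat \<Rightarrow> int) set" where
  "madic m = {x. \<forall>k. 0 \<le> x k \<and> x k < int m ^ k \<and> x (Suc k) mod int m ^ k = x k}"

definition madic_one :: "nat \<Rightarrow> nat \<Rightarrow> int" where
  "madic_one m = (\<lambda>k. 1 mod int m ^ k)"

definition madic_mult :: "nat \<Rightarrow> (nat \<Rightarrow> int) \<Rightarrow> (nat \<Rightarrow> int) \<Rightarrow> nat \<Rightarrow> int" where
  "madic_mult m x y = (\<lambda>k. (x k * y k) mod int m ^ k)"

text \<open>For p in Z_m and r = p mod m (an integer in 0..m-1), the unique s in Z_m with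
  p = m s + r has residues s mod m^k = ((p - r) mod m^(k+1)) div m.\<close>

definition madic_divm :: "nat \<Rightarrow> (nat \<Rightarrow> int) \<Rightarrow> int \<Rightarrow> nat \<Rightarrow> int" where
  "madic_divm m p r = (\<lambda>k. ((p (Suc k) - r) mod int m ^ Suc k) div int m)"

text \<open>(r_i(xi), s_i(xi)): r_0 = 0, s_0 = 1, and xi s_{i-1} = m s_i + r_i with 0 \<le> r_i < m.\<close>

fun rs :: "nat \<Rightarrow> (nat \<Rightarrow> int) \<Rightarrow> nat \<Rightarrow> int \<times> (nat \<Rightarrow> int)" where
  "rs m xi 0 = (0, madic_one m)"
| "rs m xi (Suc i) =
     (let p = madic_mult m xi (snd (rs m xi i)); r = p 1
      in (r, madic_divm m p r))"

definition r_fun :: "nat \<Rightarrow> (nat \<Rightarrow> int) \<Rightarrow> nat \<Rightarrow> int" where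
  "r_fun m xi i = fst (rs m xi i)"

datatype gen = GA | GE nat   \<comment> \<open>the stable letter a and the generators e_0, e_1, ...\<close>

type_synonym letter = "gen \<times> bool"   \<comment> \<open>True: the generator, False: its inverse\<close>
type_synonym word = "letter list"

definition inv_word :: "word \<Rightarrow> word" where
  "inv_word w = rev (map (\<lambda>(g, b). (g, \<not> b)) w)"

definition epow :: "nat \<Rightarrow> int \<Rightarrow> word" where
  "epow i k = replicate (nat \<bar>k\<bar>) (GE i, k \<ge> 0)"

text \<open>Relators: E is free abelian on e_0, e_1, ... (commutators), and the HNN relations
  a x a^-1 = phi(x) for x running over the basis m e_0, e_i - r_i(xi) e_0 (i \<ge> 1) of E_{m,xi}.\<close>

inductive relator :: "nat \<Rightarrow> (nat \<Rightarrow> int) \<Rightarrow> word \<Rightarrow> bool" for m xi where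
  comm: "relator m xi [(GE i, True), (GE j, True), (GE i, False), (GE j, False)]"
| hnn0: "relator m xi ([(GA, True)] @ epow 0 (int m) @ [(GA, False)] @ [(GE 1, False)])"
| hnn: "i \<ge> 1 \<Longrightarrow> relator m xi
          ([(GA, True)] @ [(GE i, True)] @ epow 0 (- r_fun m xi i) @ [(GA, False)] @ [(GE (Suc i), False)])"

inductive geq :: "nat \<Rightarrow> (nat \<Rightarrow> int) \<Rightarrow> word \<Rightarrow> word \<Rightarrow> bool" for m xi where
  refl: "geq m xi u u"
| sym: "geq m xi u v \<Longrightarrow> geq m xi v u"
| trans: "geq m xi u v \<Longrightarrow> geq m xi v w \<Longrightarrow> geq m xi u w"
| ctxt: "geq m xi u v \<Longrightarrow> geq m xi (x @ u @ y) (x @ v @ y)"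
| cancel: "geq m xi [(g, b), (g, \<not> b)] []"
| rel: "relator m xi r \<Longrightarrow> geq m xi r []"

definition in_E :: "nat \<Rightarrow> (nat \<Rightarrow> int) \<Rightarrow> word \<Rightarrow> bool" where
  "in_E m xi w \<longleftrightarrow> (\<exists>v. (\<forall>l \<in> set v. fst l \<noteq> GA) \<and> geq m xi w v)"

definition wword :: "nat \<Rightarrow> int \<Rightarrow> (nat \<Rightarrow> int) \<Rightarrow> word" where
  "wword n c u = replicate (Suc n) (GA, True) @ epow 0 c
     @ concat (map (\<lambda>i. [(GA, False)] @ epow 0 (- u i)) [1..<Suc n]) @ [(GA, False)]"

end

theory Submission
  imports Defs "HOL-Library.Poly_Mapping"
begin

text \<open>
  The proof has three ingredients.
  (1) Telescoping inside the group: the relations a (m e_0) a^-1 = e_1 and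
  a (e_j - r_j e_0) a^-1 = e_(j+1), together with their inverses, collapse w(s m, u) for
  s = 1 or -1 from the inside out.  As long as u_j = s r_j for j < k, the word equals the
  partial word a^(n+1-k) e_k^s (e_0^-u_k a^-1) ... (e_0^-u_n a^-1).  If t = r throughout,
  w = e_(n+1) and w' = e_(n+1)^-1, so w lies in E and the commutator is trivial.
  (2) A normal form for the left cosets of E: the coset s_1 ... s_k E is written as a
  reduced sequence of syllables e_0^c a (c arbitrary) and e_0^c a^-1 (0 <= c < m).  The
  generators act on such sequences, every relator acts trivially, hence equal words act
  equally; elements of E fix the empty sequence, which represents E itself.
  (3) If k is the first index with t_k ~= r_k, the element e_k^s e_0^(-s t_k) is not in
  the associated subgroup E_(m,xi), so the partial word at stage k sends the empty sequence
  to a sequence starting with a.  Hence w is not in E and the commutator moves the coset E.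
  Thus (i), (ii) and (iii) all hold when t = r and all fail otherwise.
\<close>

text \<open>The free abelian group E is modelled by finitely supported maps nat => int; x is the
  vector with coordinates coord x i, and vec i k stands for k e_i.\<close>

abbreviation coord :: "(nat \<Rightarrow>\<^sub>0 int) \<Rightarrow> nat \<Rightarrow> int" where
  "coord \<equiv> Poly_Mapping.lookup"

abbreviation vec :: "nat \<Rightarrow> int \<Rightarrow> (nat \<Rightarrow>\<^sub>0 int)" where
  "vec \<equiv> Poly_Mapping.single"

lemma coord_vec [simp]: "coord (vec k v) i = (if k = i then v else 0)"
  by (simp add: lookup_single when_def)

definition lin :: "(nat \<Rightarrow> int) \<Rightarrow> (nat \<Rightarrow>\<^sub>0 int) \<Rightarrow> int" where
  "lin c x = (\<Sum>i\<in>Poly_Mapping.keys x. coord x i * c i)"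

lemma lin_sum:
  assumes "finite S" and "Poly_Mapping.keys x \<subseteq> S"
  shows "lin c x = (\<Sum>i\<in>S. coord x i * c i)"
  unfolding lin_def using assms by (intro sum.mono_neutral_left) (auto simp: in_keys_iff)

lemma lin_add: "lin c (x + y) = lin c x + lin c y"
proof -
  define S where "S = Poly_Mapping.keys x \<union> Poly_Mapping.keys y"
  have S: "finite S" "Poly_Mapping.keys x \<subseteq> S" "Poly_Mapping.keys y \<subseteq> S"
      "Poly_Mapping.keys (x + y) \<subseteq> S"
    unfolding S_def using keys_add[of x y] by auto
  show ?thesis
    using S by (simp add: lin_sum[of S] lookup_add distrib_right sum.distrib)
qed

lemma lin_vec [simp]: "lin c (vec k v) = v * c k"
  by (simp add: lin_def)

lift_definition shift_down :: "(nat \<Rightarrow>\<^sub>0 int) \<Rightarrow> (nat \<Rightarrow>\<^sub>0 int)"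
  is "\<lambda>x i. if i = 0 then 0 else x (Suc i)"
proof -
  fix f :: "nat \<Rightarrow> int" assume "finite {i. f i \<noteq> 0}"
  then have "finite ((\<lambda>i. i - 1) ` {i. f i \<noteq> 0})" by simp
  moreover have "{i. (if i = 0 then 0 else f (Suc i)) \<noteq> 0} \<subseteq> (\<lambda>i. i - 1) ` {i. f i \<noteq> 0}"
    by (auto intro!: image_eqI[where x = "Suc _"] split: if_splits)
  ultimately show "finite {i. (if i = 0 then 0 else f (Suc i)) \<noteq> 0}"
    by (rule finite_subset[rotated])
qed

lift_definition shift_up :: "(nat \<Rightarrow>\<^sub>0 int) \<Rightarrow> (nat \<Rightarrow>\<^sub>0 int)"
  is "\<lambda>x i. if i \<le> 1 then 0 else x (i - 1)"
proof -
  fix f :: "nat \<Rightarrow> int" assume "finite {i. f i \<noteq> 0}"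
  then have "finite (Suc ` {i. f i \<noteq> 0})" by simp
  moreover have "{i. (if i \<le> 1 then 0 else f (i - 1)) \<noteq> 0} \<subseteq> Suc ` {i. f i \<noteq> 0}"
    by (auto intro!: image_eqI[where x = "_ - 1"] split: if_splits)
  ultimately show "finite {i. (if i \<le> 1 then 0 else f (i - 1)) \<noteq> 0}"
    by (rule finite_subset[rotated])
qed

lemma coord_shift_down [simp]: "coord (shift_down x) i = (if i = 0 then 0 else coord x (Suc i))"
  by (simp add: shift_down.rep_eq)

lemma coord_shift_up [simp]: "coord (shift_up x) i = (if i \<le> 1 then 0 else coord x (i - 1))"
  by (simp add: shift_up.rep_eq)

lemma shift_down_add: "shift_down (x + y) = shift_down x + shift_down y"
  by (rule poly_mapping_eqI) (simp add: lookup_add)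

lemma geq_append: "geq M xi u u' \<Longrightarrow> geq M xi v v' \<Longrightarrow> geq M xi (u @ v) (u' @ v')"
  using geq.ctxt[of M xi u u' "[]" v] geq.ctxt[of M xi v v' u' "[]"] by (auto intro: geq.trans)

lemma geq_cancel_inner: "geq M xi (x @ [(g, b), (g, \<not> b)] @ y) (x @ y)"
  using geq.ctxt[OF geq.cancel[of M xi g b], of x y] by simp

lemma geq_move_right: "geq M xi (u @ [(g, b)]) v \<Longrightarrow> geq M xi u (v @ [(g, \<not> b)])"
  using geq_append[OF _ geq.refl, of M xi "u @ [(g, b)]" v "[(g, \<not> b)]"]
    geq_cancel_inner[of M xi u g b "[]"]
  by simp (meson geq.sym geq.trans)

lemma geq_move_left: "geq M xi ([(g, b)] @ u) v \<Longrightarrow> geq M xi u ([(g, \<not> b)] @ v)"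
  using geq_append[OF geq.refl, of M xi "[(g, b)] @ u" v "[(g, \<not> b)]"]
    geq_cancel_inner[of M xi "[]" g "\<not> b" u]
  by simp (meson geq.sym geq.trans)

lemma inv_word_Nil: "inv_word [] = []"
  by (simp add: inv_word_def)

lemma inv_word_Cons: "inv_word (p # u) = inv_word u @ [(fst p, \<not> snd p)]"
  by (simp add: inv_word_def split: prod.splits)

lemma inv_word_append: "inv_word (u @ v) = inv_word v @ inv_word u"
  by (simp add: inv_word_def)

lemma inv_word_epow: "inv_word (epow i k) = epow i (- k)"
  by (cases "k = 0") (auto simp: inv_word_def epow_def)

lemma inv_word_left_cancel: "geq M xi (inv_word u @ u) []"
proof (induction u)
  case Nil
  then show ?case by (simp add: inv_word_Nil geq.refl)
next
  case (Cons p u)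
  obtain g b where p: "p = (g, b)" by force
  have "geq M xi (inv_word u @ [(g, \<not> b), (g, b)] @ u) (inv_word u @ u)"
    using geq_cancel_inner[of M xi _ g "\<not> b"] by simp
  then show ?case using Cons p by (auto simp: inv_word_Cons intro: geq.trans)
qed

lemma geq_inv_word: "geq M xi u v \<Longrightarrow> geq M xi (inv_word u) (inv_word v)"
proof (induction rule: geq.induct)
  case (ctxt u v x y)
  then show ?case by (simp add: inv_word_append geq.ctxt)
next
  case (cancel g b)
  then show ?case by (simp add: inv_word_def geq.cancel)
next
  case (rel r)
  have "geq M xi (inv_word r @ r @ []) (inv_word r @ [] @ [])"
    by (rule geq.ctxt[OF geq.rel[OF rel]])
  then show ?case using inv_word_left_cancel[of M xi r]
    by (simp add: inv_word_Nil) (meson geq.sym geq.trans)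
qed (auto intro: geq.intros)

lemma e_commute: "geq M xi [(GE i, True), (GE j, False)] [(GE j, False), (GE i, True)]"
proof -
  have "geq M xi ([(GE j, True), (GE i, True), (GE j, False)] @ [(GE i, False)]) []"
    using geq.rel[OF relator.comm[of M xi j i]] by simp
  then have "geq M xi ([(GE j, True)] @ [(GE i, True), (GE j, False)]) [(GE i, True)]"
    using geq_move_right by fastforce
  then show ?thesis using geq_move_left by fastforce
qed

lemma epow_commute:
  assumes "0 \<le> k"
  shows "geq M xi (epow i k @ [(GE j, False)]) ([(GE j, False)] @ epow i k)"
proof -
  have "geq M xi (replicate n (GE i, True) @ [(GE j, False)]) ([(GE j, False)] @ replicate n (GE i, True))"
    for n
  proof (induction n)
    case 0
    then show ?case by (simp add: geq.refl)
  next
    case (Suc n)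
    have "geq M xi ([(GE i, True)] @ (replicate n (GE i, True) @ [(GE j, False)]))
                   ([(GE i, True), (GE j, False)] @ replicate n (GE i, True))"
      using geq_append[OF geq.refl[of M xi "[(GE i, True)]"] Suc.IH] by simp
    moreover have "geq M xi ([(GE i, True), (GE j, False)] @ replicate n (GE i, True))
                   ([(GE j, False), (GE i, True)] @ replicate n (GE i, True))"
      using geq_append[OF e_commute geq.refl] .
    ultimately show ?case by simp (meson geq.trans)
  qed
  then show ?thesis using assms by (simp add: epow_def)
qed

section \<open>Telescoping the words w(s m, u)\<close>

lemma epow_1: "epow i 1 = [(GE i, True)]"
  by (simp add: epow_def)

lemma epow_minus_1: "epow i (- 1) = [(GE i, False)]"
  by (simp add: epow_def)

text \<open>partial_word n s u j = a^(n+1-j) e_j^s (e_0^-u_j a^-1) ... (e_0^-u_n a^-1): the shape of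
  w(s m, u) after its innermost j - 1 syllables have been collapsed.\<close>

definition partial_word :: "nat \<Rightarrow> int \<Rightarrow> (nat \<Rightarrow> int) \<Rightarrow> nat \<Rightarrow> word" where
  "partial_word n s u j = replicate (Suc n - j) (GA, True) @ epow j s
     @ concat (map (\<lambda>i. epow 0 (- u i) @ [(GA, False)]) [j..<Suc n])"

lemma partial_word_split:
  assumes "k \<le> n"
  shows "partial_word n s u k =
    replicate (n - k) (GA, True) @ ([(GA, True)] @ epow k s @ epow 0 (- u k) @ [(GA, False)])
    @ concat (map (\<lambda>i. epow 0 (- u i) @ [(GA, False)]) [Suc k..<Suc n])"
proof -
  have "[k..<Suc n] = k # [Suc k..<Suc n]" using assms by (simp add: upt_conv_Cons del: upt_Suc)
  moreover have "replicate (Suc n - k) (GA, True) = replicate (n - k) (GA, True) @ [(GA, True)]"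
    using assms by (simp add: Suc_diff_le replicate_append_same)
  ultimately show ?thesis unfolding partial_word_def by (simp del: upt_Suc)
qed

lemma partial_word_last: "partial_word n s u (Suc n) = epow (Suc n) s"
  by (simp add: partial_word_def)

text \<open>The locale fixes the parameters of the group BS~(m, xi): M is the positive integer m of
  the paper (a natural number, so int M appears in arithmetic) and xi the m-adic integer.\<close>

locale bs_group =
  fixes M :: nat and xi :: "nat \<Rightarrow> int"
  assumes M_pos: "0 < M"
begin

lemma r_fun_range: "1 \<le> i \<Longrightarrow> 0 \<le> r_fun M xi i \<and> r_fun M xi i < int M"
  using M_pos by (cases i) (auto simp: r_fun_def Let_def madic_mult_def)

lemma conj_e0:
  assumes "s \<in> {1, -1}"
  shows "geq M xi ([(GA, True)] @ epow 0 (s * int M) @ [(GA, False)]) (epow 1 s)"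
proof -
  have pos: "geq M xi ([(GA, True)] @ epow 0 (int M) @ [(GA, False)]) [(GE 1, True)]"
    using geq_move_right[of M xi "[(GA, True)] @ epow 0 (int M) @ [(GA, False)]" "GE 1" False "[]"]
      geq.rel[OF relator.hnn0[of M xi]] by simp
  have "geq M xi (inv_word ([(GA, True)] @ epow 0 (int M) @ [(GA, False)])) (inv_word [(GE 1, True)])"
    using geq_inv_word[OF pos] .
  then have neg: "geq M xi ([(GA, True)] @ epow 0 (- int M) @ [(GA, False)]) [(GE 1, False)]"
    by (simp add: inv_word_append inv_word_epow inv_word_Cons inv_word_Nil)
  show ?thesis using assms pos neg by (auto simp: epow_1 epow_minus_1)
qed

text \<open>The relation a (s e_j - s r_j e_0) a^-1 = e_(j+1)^s for s = 1 or -1; the case s = -1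
  is the inverse relation, rearranged using that e_0 and e_j commute.\<close>

lemma conj_e_basis:
  assumes "s \<in> {1, -1}" and "1 \<le> j"
  shows "geq M xi ([(GA, True)] @ epow j s @ epow 0 (- s * r_fun M xi j) @ [(GA, False)])
                  (epow (Suc j) s)"
proof -
  define r where "r = r_fun M xi j"
  have pos: "geq M xi ([(GA, True), (GE j, True)] @ epow 0 (- r) @ [(GA, False)]) [(GE (Suc j), True)]"
    using geq_move_right[of M xi "[(GA, True), (GE j, True)] @ epow 0 (- r) @ [(GA, False)]"
        "GE (Suc j)" False "[]"] geq.rel[OF relator.hnn[OF assms(2), of M xi]]
    by (simp add: r_def)
  have "geq M xi (inv_word ([(GA, True), (GE j, True)] @ epow 0 (- r) @ [(GA, False)]))
                 (inv_word [(GE (Suc j), True)])"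
    using geq_inv_word[OF pos] .
  then have "geq M xi ([(GA, True)] @ (epow 0 r @ [(GE j, False)]) @ [(GA, False)])
                      [(GE (Suc j), False)]"
    by (simp add: inv_word_append inv_word_epow inv_word_Cons inv_word_Nil)
  moreover have "geq M xi ([(GA, True)] @ ([(GE j, False)] @ epow 0 r) @ [(GA, False)])
                          ([(GA, True)] @ (epow 0 r @ [(GE j, False)]) @ [(GA, False)])"
    using r_fun_range[OF assms(2)] unfolding r_def
    by (intro geq.ctxt geq.sym[OF epow_commute]) simp
  ultimately have neg: "geq M xi ([(GA, True), (GE j, False)] @ epow 0 r @ [(GA, False)])
                                 [(GE (Suc j), False)]"
    by simp (meson geq.trans)
  show ?thesis using assms(1) pos neg by (auto simp: r_def epow_1 epow_minus_1)
qed

lemma wword_eq_partial_word: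
  assumes "s \<in> {1, -1}"
  shows "geq M xi (wword n (s * int M) u) (partial_word n s u 1)"
proof -
  have "concat (map (\<lambda>i. [(GA, False)] @ epow 0 (- u i)) is) @ [(GA, False)]
      = [(GA, False)] @ concat (map (\<lambda>i. epow 0 (- u i) @ [(GA, False)]) is)" for "is"
    by (induction "is") auto
  then have "wword n (s * int M) u = replicate n (GA, True)
      @ ([(GA, True)] @ epow 0 (s * int M) @ [(GA, False)])
      @ concat (map (\<lambda>i. epow 0 (- u i) @ [(GA, False)]) [1..<Suc n])"
    unfolding wword_def by (simp add: replicate_append_same[symmetric] del: upt_Suc)
  then show ?thesis
    unfolding partial_word_def using geq.ctxt[OF conj_e0[OF assms]] by (simp del: upt_Suc)
qed

lemma partial_word_step:
  assumes "s \<in> {1, -1}" and "1 \<le> j" and "j \<le> n" and "u j = s * r_fun M xi j"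
  shows "geq M xi (partial_word n s u j) (partial_word n s u (Suc j))"
proof -
  have "partial_word n s u (Suc j) = replicate (n - j) (GA, True) @ epow (Suc j) s
      @ concat (map (\<lambda>i. epow 0 (- u i) @ [(GA, False)]) [Suc j..<Suc n])"
    by (simp add: partial_word_def del: upt_Suc)
  then show ?thesis
    unfolding partial_word_split[OF assms(3)] assms(4)
    using geq.ctxt[OF conj_e_basis[OF assms(1,2)]] by (simp del: upt_Suc)
qed

lemma wword_telescope:
  assumes "s \<in> {1, -1}" and "1 \<le> k" and "k \<le> Suc n"
    and "\<forall>j\<in>{1..<k}. u j = s * r_fun M xi j"
  shows "geq M xi (wword n (s * int M) u) (partial_word n s u k)"
  using assms(2-4)
proof (induction k rule: nat_induct_at_least)
  case base
  then show ?case using wword_eq_partial_word[OF assms(1)] by simp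
next
  case (Suc k)
  then have "geq M xi (partial_word n s u k) (partial_word n s u (Suc k))"
    by (intro partial_word_step[OF assms(1)]) auto
  with Suc show ?case by (auto intro: geq.trans)
qed

section \<open>The coset action on normal forms\<close>

text \<open>The associated subgroup E_(m,xi), with basis m e_0 and
  e_i - r_i e_0, consists of the x with m dividing weight x; phi is the isomorphism onto E_1
  = span of e_1, e_2, ..., and phi_inv inverts it on E_1 (it ignores the e_0 coordinate).
  lift x q is q e_1 plus the shift of x; phi x = lift x (weight x / m) on E_(m,xi).\<close>

definition weight :: "(nat \<Rightarrow>\<^sub>0 int) \<Rightarrow> int" where
  "weight x = lin (\<lambda>i. if i = 0 then 1 else r_fun M xi i) x"

definition phi_inv :: "(nat \<Rightarrow>\<^sub>0 int) \<Rightarrow> (nat \<Rightarrow>\<^sub>0 int)" where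
  "phi_inv x = vec 0 (int M * coord x 1 - weight (shift_down x)) + shift_down x"

definition lift :: "(nat \<Rightarrow>\<^sub>0 int) \<Rightarrow> int \<Rightarrow> (nat \<Rightarrow>\<^sub>0 int)" where
  "lift x q = vec 1 q + shift_up x"

definition phi :: "(nat \<Rightarrow>\<^sub>0 int) \<Rightarrow> (nat \<Rightarrow>\<^sub>0 int)" where
  "phi x = lift x (weight x div int M)"

lemma weight_add: "weight (x + y) = weight x + weight y"
  by (simp add: weight_def lin_add)

lemma weight_vec: "weight (vec k v) = (if k = 0 then v else v * r_fun M xi k)"
  by (simp add: weight_def)

lemma coord_lift: "coord (lift x q) i = (if i = 1 then q else if i = 0 then 0 else coord x (i - 1))"
  by (simp add: lift_def lookup_add)

lemma coord_phi_inv: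
  "coord (phi_inv x) i = (if i = 0 then int M * coord x 1 - weight (shift_down x) else coord x (Suc i))"
  by (simp add: phi_inv_def lookup_add)

lemma weight_phi_inv: "weight (phi_inv x) = int M * coord x 1"
  by (simp add: phi_inv_def weight_add weight_vec)

lemma phi_inv_add: "phi_inv (x + y) = phi_inv x + phi_inv y"
  by (rule poly_mapping_eqI) (simp add: coord_phi_inv lookup_add shift_down_add weight_add algebra_simps)

lemma lift_add: "lift (x + y) (p + q) = lift x p + lift y q"
  by (rule poly_mapping_eqI) (simp add: coord_lift lookup_add)

lemma shift_down_lift: "shift_down (lift x q) = x - vec 0 (coord x 0)"
  by (rule poly_mapping_eqI) (simp add: coord_lift lookup_minus)

lemma phi_inv_phi:
  assumes "int M dvd weight x"
  shows "phi_inv (phi x) = x"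
proof (rule poly_mapping_eqI)
  fix i
  have "int M * (weight x div int M) = weight x" using assms by simp
  moreover have "weight (x - vec 0 (coord x 0)) = weight x - coord x 0"
    using weight_add[of "x - vec 0 (coord x 0)" "vec 0 (coord x 0)"] by (simp add: weight_vec)
  ultimately show "coord (phi_inv (phi x)) i = coord x i"
    by (simp add: coord_phi_inv phi_def coord_lift shift_down_lift)
qed

lemma weight_zero [simp]: "weight 0 = 0"
  by (simp add: weight_def lin_def)

lemma phi_inv_zero [simp]: "phi_inv 0 = 0"
  using phi_inv_add[of 0 0] by simp

lemma lift_zero [simp]: "lift 0 0 = 0"
  by (rule poly_mapping_eqI) (simp add: coord_lift)

text \<open>A normal form is a list of syllables (c, True) = e_0^c a and (c, False) = e_0^c a^-1,
  read as the left coset of E given by their product.  e_act x is left multiplication by x.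
  Before a: the e_0 coordinate of x is absorbed into c and the remainder, which lies in E_1,
  passes through a as its phi-preimage.  Before a^-1: x + c e_0 is corrected by a multiple of
  e_0 into E_(m,xi), the residue becoming the new representative, and passes through a^-1
  as its phi-image.\<close>

fun e_act :: "(nat \<Rightarrow>\<^sub>0 int) \<Rightarrow> (int \<times> bool) list \<Rightarrow> (int \<times> bool) list" where
  "e_act x [] = []"
| "e_act x ((c, True) # l) = (c + coord x 0, True) # e_act (phi_inv x) l"
| "e_act x ((c, False) # l) =
     ((weight x + c) mod int M, False) # e_act (lift x ((weight x + c) div int M)) l"

lemma e_act_add: "e_act x (e_act y l) = e_act (x + y) l"
proof (induction l arbitrary: x y)
  case (Cons p l)
  obtain c b where p: "p = (c, b)" by force
  show ?case
  proof (cases b)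
    case True
    then show ?thesis using Cons p by (simp add: phi_inv_add lookup_add algebra_simps)
  next
    case False
    define q where "q = (weight y + c) div int M"
    define c' where "c' = (weight y + c) mod int M"
    have split: "weight (x + y) + c = (weight x + c') + q * int M"
      unfolding q_def c'_def weight_add by (metis add.assoc div_mult_mod_eq add.commute)
    have "(weight (x + y) + c) div int M = (weight x + c') div int M + q"
      unfolding split using M_pos by simp
    moreover have "(weight (x + y) + c) mod int M = (weight x + c') mod int M"
      unfolding split by simp
    ultimately show ?thesis using Cons p False
      by (simp add: q_def[symmetric] c'_def[symmetric] lift_add[symmetric])
  qed
qed simp

text \<open>Syllables e_0^c a^-1 must carry a coset representative c in [0, m).\<close>

definition syl_ok :: "int \<times> bool \<Rightarrow> bool" where
  "syl_ok p \<longleftrightarrow> snd p \<or> (0 \<le> fst p \<and> fst p < int M)"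

definition syls_ok :: "(int \<times> bool) list \<Rightarrow> bool" where
  "syls_ok l \<longleftrightarrow> (\<forall>p\<in>set l. syl_ok p)"

lemma syls_ok_Cons: "syls_ok (p # l) \<longleftrightarrow> syl_ok p \<and> syls_ok l"
  by (simp add: syls_ok_def)

lemma e_act_zero: "syls_ok l \<Longrightarrow> e_act 0 l = l"
proof (induction l)
  case (Cons p l)
  then show ?case by (cases p; cases "snd p") (auto simp: syls_ok_def syl_ok_def)
qed simp

lemma syls_ok_e_act: "syls_ok (e_act x l)"
  by (induction x l rule: e_act.induct) (use M_pos in \<open>auto simp: syls_ok_def syl_ok_def\<close>)

text \<open>Reduced normal forms: a syllable with trivial representative e_0^0 never follows a
  syllable whose letter is the inverse of its own (the two letters would cancel).\<close>

fun reduced :: "(int \<times> bool) list \<Rightarrow> bool" where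
  "reduced [] = True"
| "reduced [p] = syl_ok p"
| "reduced (p # q # l) \<longleftrightarrow> syl_ok p \<and> \<not> (fst q = 0 \<and> snd q = (\<not> snd p)) \<and> reduced (q # l)"

lemma reduced_Cons:
  "reduced (p # l) \<longleftrightarrow> syl_ok p \<and> (l = [] \<or> \<not> (fst (hd l) = 0 \<and> snd (hd l) = (\<not> snd p))) \<and> reduced l"
  by (cases l) auto

lemma reduced_syls_ok: "reduced l \<Longrightarrow> syls_ok l"
  by (induction l rule: reduced.induct) (auto simp: syls_ok_def)

lemma reduced_e_act: "reduced l \<Longrightarrow> reduced (e_act x l)"
proof (induction l arbitrary: x rule: reduced.induct)
  case (2 p)
  then show ?case using M_pos by (cases p; cases "snd p") (auto simp: syl_ok_def)
next
  case (3 p q l)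
  obtain c b c' b' where pq: "p = (c, b)" "q = (c', b')" by force
  have q_ok: "0 \<le> c' \<and> c' < int M" if "\<not> b'"
    using "3.prems" pq that by (auto simp: reduced_Cons syl_ok_def)
  have no_cancel: "\<not> (c' = 0 \<and> b' = (\<not> b))" and p_ok: "syl_ok p"
    using "3.prems" pq by auto
  have IH: "reduced (e_act y (q # l))" for y
    using 3 by simp
  show ?case
    using IH[of "phi_inv x"] IH[of "lift x ((weight x + c) div int M)"] q_ok no_cancel p_ok M_pos
    by (cases b; cases b') (auto simp: pq syl_ok_def weight_phi_inv coord_lift)
qed simp

definition a_act :: "(int \<times> bool) list \<Rightarrow> (int \<times> bool) list" where
  "a_act l = (if l \<noteq> [] \<and> hd l = (0, False) then tl l else (0, True) # l)"

definition a_inv_act :: "(int \<times> bool) list \<Rightarrow> (int \<times> bool) list" where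
  "a_inv_act l = (if l \<noteq> [] \<and> hd l = (0, True) then tl l else (0, False) # l)"

lemma reduced_a_act: "reduced l \<Longrightarrow> reduced (a_act l)"
  unfolding a_act_def by (cases l) (auto simp: reduced_Cons syl_ok_def)

lemma reduced_a_inv_act: "reduced l \<Longrightarrow> reduced (a_inv_act l)"
  unfolding a_inv_act_def using M_pos by (cases l) (auto simp: reduced_Cons syl_ok_def)

lemma a_inv_act_a_act: "reduced l \<Longrightarrow> a_inv_act (a_act l) = l"
  unfolding a_act_def a_inv_act_def by (cases l) (auto simp: reduced_Cons)

lemma a_act_a_inv_act: "reduced l \<Longrightarrow> a_act (a_inv_act l) = l"
  unfolding a_act_def a_inv_act_def by (cases l) (auto simp: reduced_Cons)

text \<open>The action of letters and of words (the rightmost letter acts first).\<close>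

definition letter_act :: "letter \<Rightarrow> (int \<times> bool) list \<Rightarrow> (int \<times> bool) list" where
  "letter_act p = (case p of
      (GA, b) \<Rightarrow> if b then a_act else a_inv_act
    | (GE i, b) \<Rightarrow> e_act (vec i (if b then 1 else -1)))"

definition word_act :: "word \<Rightarrow> (int \<times> bool) list \<Rightarrow> (int \<times> bool) list" where
  "word_act w l = foldr letter_act w l"

lemma word_act_Nil [simp]: "word_act [] l = l"
  and word_act_Cons [simp]: "word_act (p # w) l = letter_act p (word_act w l)"
  and word_act_append [simp]: "word_act (u @ v) l = word_act u (word_act v l)"
  by (simp_all add: word_act_def)

lemma letter_act_simps [simp]:
  "letter_act (GA, True) = a_act" "letter_act (GA, False) = a_inv_act"
  "letter_act (GE i, True) = e_act (vec i 1)" "letter_act (GE i, False) = e_act (vec i (-1))"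
  by (simp_all add: letter_act_def)

lemma reduced_word_act: "reduced l \<Longrightarrow> reduced (word_act w l)"
proof (induction w)
  case (Cons p w)
  then show ?case
    by (auto simp: letter_act_def split: gen.splits prod.splits
        intro: reduced_a_act reduced_a_inv_act reduced_e_act)
qed simp

lemma letter_act_cancel: "reduced l \<Longrightarrow> letter_act (g, b) (letter_act (g, \<not> b) l) = l"
  by (cases g; cases b)
    (auto simp: a_inv_act_a_act a_act_a_inv_act e_act_add single_uminus e_act_zero reduced_syls_ok)

lemma word_act_epow: "syls_ok l \<Longrightarrow> word_act (epow i k) l = e_act (vec i k) l"
proof -
  assume ok: "syls_ok l"
  have "word_act (replicate n (GE i, b)) l = e_act (vec i (if b then int n else - int n)) l" for n b
    by (induction n) (auto simp: e_act_zero[OF ok] e_act_add single_add[symmetric] algebra_simps)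
  then show ?thesis by (simp add: epow_def)
qed

text \<open>For x in E_(m,xi), the word a x a^-1 acts on normal forms exactly as phi(x) does:
  this is the defining relation of the HNN extension, verified on normal forms.\<close>

lemma a_conj_act:
  assumes "reduced l" and "int M dvd weight x"
  shows "a_act (e_act x (a_inv_act l)) = e_act (phi x) l"
proof (cases "l \<noteq> [] \<and> hd l = (0, True)")
  case True
  then obtain l' where l: "l = (0, True) # l'" by (cases l) auto
  have "\<not> (e_act x l' \<noteq> [] \<and> hd (e_act x l') = (0, False))"
  proof (cases l')
    case (Cons q l'')
    then show ?thesis
      using assms l
      by (cases q; cases "snd q") (auto simp: reduced_Cons syl_ok_def dvd_add_right_iff zdvd_not_zless)
  qed simp
  then show ?thesis
    using l phi_inv_phi[OF assms(2)] by (auto simp: a_act_def a_inv_act_def phi_def coord_lift)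
next
  case False
  then show ?thesis
    using assms(2) by (auto simp: a_act_def a_inv_act_def phi_def)
qed

lemma hnn_relator_act:
  assumes "reduced l" and "int M dvd weight x" and "phi x = vec k 1"
    and "\<And>l'. syls_ok l' \<Longrightarrow> word_act X l' = e_act x l'"
  shows "word_act ([(GA, True)] @ X @ [(GA, False), (GE k, False)]) l = l"
proof -
  define l' where "l' = e_act (vec k (-1)) l"
  have l': "reduced l'" unfolding l'_def using reduced_e_act[OF assms(1)] .
  have "word_act ([(GA, True)] @ X @ [(GA, False), (GE k, False)]) l = a_act (e_act x (a_inv_act l'))"
    using assms(4)[OF reduced_syls_ok[OF reduced_a_inv_act[OF l']]] by (simp add: l'_def)
  also have "\<dots> = e_act (vec k 1 + vec k (-1)) l"
    using a_conj_act[OF l' assms(2)] assms(3) by (simp add: l'_def e_act_add)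
  also have "\<dots> = l"
    using e_act_zero[OF reduced_syls_ok[OF assms(1)]] by (simp add: single_uminus)
  finally show ?thesis .
qed

lemma relator_word_act:
  assumes "relator M xi w" and "reduced l"
  shows "word_act w l = l"
  using assms(1)
proof cases
  case (comm i j)
  have "vec i 1 + (vec j 1 + (vec i (-1) + vec j (-1))) = 0"
    by (simp add: single_uminus algebra_simps)
  then show ?thesis
    using comm e_act_zero[OF reduced_syls_ok[OF assms(2)]] by (simp add: e_act_add)
next
  case hnn0
  have "phi (vec 0 (int M)) = vec 1 1"
    using M_pos by (intro poly_mapping_eqI) (simp add: phi_def weight_vec coord_lift del: single_of_nat)
  then show ?thesis
    using hnn0 hnn_relator_act[OF assms(2), of "vec 0 (int M)" 1 "epow 0 (int M)"]
    by (simp add: word_act_epow weight_vec del: single_of_nat)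
next
  case (hnn i)
  define x where "x = vec i 1 + vec 0 (- r_fun M xi i)"
  have wx: "weight x = 0" using hnn by (simp add: x_def weight_add weight_vec)
  then have "phi x = vec (Suc i) 1"
    using hnn by (intro poly_mapping_eqI) (auto simp: phi_def x_def coord_lift lookup_add)
  moreover have "word_act ((GE i, True) # epow 0 (- r_fun M xi i)) l' = e_act x l'" if "syls_ok l'" for l'
    using that by (simp add: word_act_epow e_act_add x_def)
  ultimately show ?thesis
    using hnn hnn_relator_act[OF assms(2), of x "Suc i" "(GE i, True) # epow 0 (- r_fun M xi i)"] wx
    by simp
qed

lemma geq_word_act: "geq M xi u v \<Longrightarrow> reduced l \<Longrightarrow> word_act u l = word_act v l"
proof (induction arbitrary: l rule: geq.induct)
  case (ctxt u v x y)
  then show ?case using reduced_word_act by simp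
next
  case (cancel g b)
  then show ?case using letter_act_cancel[of l g b] by simp
next
  case (rel r)
  then show ?case using relator_word_act by simp
qed auto

text \<open>Elements of E fix the coset E, represented by the empty sequence.\<close>

lemma in_E_word_act: "in_E M xi w \<Longrightarrow> word_act w [] = []"
proof -
  assume "in_E M xi w"
  then obtain v where v: "\<forall>p\<in>set v. fst p \<noteq> GA" and "geq M xi w v"
    unfolding in_E_def by blast
  then have "word_act w [] = word_act v []" by (simp add: geq_word_act)
  also have "word_act v [] = []"
    using v
  proof (induction v)
    case (Cons p v)
    then obtain i b where "p = (GE i, b)" by (cases p; cases "fst p") auto
    with Cons show ?case by (cases b) auto
  qed simp
  finally show ?thesis .
qed

section \<open>Detecting a mismatch\<close>

definition starts_with_a :: "(int \<times> bool) list \<Rightarrow> bool" where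
  "starts_with_a l \<longleftrightarrow> l \<noteq> [] \<and> hd l = (0, True)"

lemma e0_a_inv_keeps_head:
  assumes "syls_ok l" and "\<not> starts_with_a l"
  shows "syls_ok (word_act (epow 0 k @ [(GA, False)]) l)
       \<and> \<not> starts_with_a (word_act (epow 0 k @ [(GA, False)]) l)"
proof -
  have "a_inv_act l = (0, False) # l"
    using assms(2) by (auto simp: a_inv_act_def starts_with_a_def)
  moreover have "syls_ok ((0, False) # l)"
    using assms(1) M_pos by (simp add: syls_ok_def syl_ok_def)
  ultimately show ?thesis
    using M_pos by (simp add: word_act_epow syls_ok_Cons syl_ok_def syls_ok_e_act starts_with_a_def)
qed

lemma tail_keeps_head:
  assumes "syls_ok l" and "\<not> starts_with_a l"
  shows "syls_ok (word_act (concat (map (\<lambda>i. epow 0 (v i) @ [(GA, False)]) is)) l)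
       \<and> \<not> starts_with_a (word_act (concat (map (\<lambda>i. epow 0 (v i) @ [(GA, False)]) is)) l)"
proof (induction "is")
  case (Cons i "is")
  then show ?case
    using e0_a_inv_keeps_head[of "word_act (concat (map (\<lambda>i. epow 0 (v i) @ [(GA, False)]) is)) l" "v i"]
    by simp
qed (use assms in simp)

lemma a_pow_act:
  assumes "\<not> (l \<noteq> [] \<and> hd l = (0, False))"
  shows "word_act (replicate j (GA, True)) l = replicate j (0, True) @ l"
proof (induction j)
  case (Suc j)
  have "\<not> (replicate j (0, True) @ l \<noteq> [] \<and> hd (replicate j (0, True) @ l) = (0, False))"
    using assms by (cases j) auto
  with Suc show ?case by (auto simp: a_act_def)
qed simp

lemma partial_word_starts_with_a:
  assumes "1 \<le> k" and "k \<le> n" and "(s * r_fun M xi k - u k) mod int M \<noteq> 0"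
    and "syls_ok l" and "\<not> starts_with_a l"
  shows "\<exists>l'. word_act (partial_word n s u k) l = (0, True) # l'"
proof -
  define x where "x = vec k s + vec 0 (- u k)"
  define l\<^sub>1 where "l\<^sub>1 = word_act (concat (map (\<lambda>i. epow 0 (- u i) @ [(GA, False)]) [Suc k..<Suc n])) l"
  have ok: "syls_ok l\<^sub>1" "\<not> starts_with_a l\<^sub>1"
    using tail_keeps_head[OF assms(4,5), of "\<lambda>i. - u i" "[Suc k..<Suc n]"] unfolding l\<^sub>1_def by (auto simp del: upt_Suc)
  then have ok': "syls_ok ((0, False) # l\<^sub>1)" "a_inv_act l\<^sub>1 = (0, False) # l\<^sub>1"
    using M_pos by (auto simp: syls_ok_def syl_ok_def a_inv_act_def starts_with_a_def)
  have "weight x = s * r_fun M xi k - u k"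
    using assms(1) by (simp add: x_def weight_add weight_vec)
  moreover have "word_act (epow 0 (- u k) @ [(GA, False)]) l\<^sub>1 = e_act (vec 0 (- u k)) ((0, False) # l\<^sub>1)"
    using ok' by (simp add: word_act_epow del: e_act.simps)
  ultimately have "word_act (epow k s @ epow 0 (- u k) @ [(GA, False)]) l\<^sub>1 = e_act x ((0, False) # l\<^sub>1)"
    by (simp add: word_act_epow syls_ok_e_act e_act_add x_def del: e_act.simps)
  then have "word_act (epow k s @ epow 0 (- u k) @ [(GA, False)]) l\<^sub>1
      = (weight x mod int M, False) # e_act (lift x (weight x div int M)) l\<^sub>1"
    by simp
  then have "word_act (partial_word n s u k) l = word_act (replicate (n - k) (GA, True))
      ((0, True) # (weight x mod int M, False) # e_act (lift x (weight x div int M)) l\<^sub>1)"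
    using assms(3) \<open>weight x = _\<close>
    by (simp add: partial_word_split[OF assms(2)] l\<^sub>1_def a_act_def del: upt_Suc)
  then show ?thesis by (simp add: a_pow_act) (cases "n - k"; simp)
qed

lemma wword_matched:
  assumes "s \<in> {1, -1}" and "\<forall>i\<in>{1..n}. u i = s * r_fun M xi i"
  shows "geq M xi (wword n (s * int M) u) (epow (Suc n) s)"
  using wword_telescope[OF assms(1), of "Suc n" n u] assms(2)
  by (simp add: partial_word_last atLeastLessThanSuc_atLeastAtMost)

lemma matched_case:
  assumes "\<forall>i\<in>{1..n}. t i = r_fun M xi i"
  shows "in_E M xi (wword n (int M) t)
       \<and> geq M xi (wword n (int M) t @ [(GE 0, True)]
                    @ wword n (- int M) (\<lambda>i. - t i) @ [(GE 0, False)]) []"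
proof -
  have pos: "geq M xi (wword n (int M) t) [(GE (Suc n), True)]"
    using wword_matched[of 1 n t] assms by (simp add: epow_1)
  have neg: "geq M xi (wword n (- int M) (\<lambda>i. - t i)) [(GE (Suc n), False)]"
    using wword_matched[of "-1" n "\<lambda>i. - t i"] assms by (simp add: epow_minus_1)
  have "geq M xi (wword n (int M) t @ [(GE 0, True)] @ wword n (- int M) (\<lambda>i. - t i) @ [(GE 0, False)])
                 ([(GE (Suc n), True)] @ [(GE 0, True)] @ [(GE (Suc n), False)] @ [(GE 0, False)])"
    by (intro geq_append pos neg geq.refl)
  moreover have "geq M xi [(GE (Suc n), True), (GE 0, True), (GE (Suc n), False), (GE 0, False)] []"
    by (rule geq.rel[OF relator.comm])
  moreover have "in_E M xi (wword n (int M) t)"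
    unfolding in_E_def using pos by (intro exI[of _ "[(GE (Suc n), True)]"]) auto
  ultimately show ?thesis by (auto intro: geq.trans)
qed

lemma mod_diff_nonzero:
  fixes a b m :: int
  assumes "0 \<le> a" "a < m" "0 \<le> b" "b < m" "a \<noteq> b"
  shows "(a - b) mod m \<noteq> 0"
proof
  assume "(a - b) mod m = 0"
  then have "a mod m = b mod m" by (simp add: mod_eq_dvd_iff mod_eq_0_iff_dvd)
  with assms show False by simp
qed

text \<open>Let k be the first index with t_k ~= r_k.  Then w(s m, s t) for s = 1 or -1 turns every
  reduced form not beginning with a into one beginning with a: by telescoping it equals the
  partial word at stage k, and s e_k - s t_k e_0 is not in E_(m,xi) since r_k and t_k are
  distinct residues.\<close>

lemma mismatch_starts_with_a:
  assumes t_range: "\<forall>i\<in>{1..n}. 0 \<le> t i \<and> t i < int M"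
    and k: "1 \<le> k" "k \<le> n" "t k \<noteq> r_fun M xi k"
    and agree: "\<forall>j\<in>{1..<k}. t j = r_fun M xi j"
    and s: "s \<in> {1, -1}"
    and l: "reduced l" "\<not> starts_with_a l"
  shows "\<exists>l'. word_act (wword n (s * int M) (\<lambda>i. s * t i)) l = (0, True) # l'"
proof -
  have "geq M xi (wword n (s * int M) (\<lambda>i. s * t i)) (partial_word n s (\<lambda>i. s * t i) k)"
    using wword_telescope[OF s, of k n] k agree by simp
  then have "word_act (wword n (s * int M) (\<lambda>i. s * t i)) l
      = word_act (partial_word n s (\<lambda>i. s * t i) k) l"
    using geq_word_act l(1) by blast
  moreover have "(r_fun M xi k - t k) mod int M \<noteq> 0" "(t k - r_fun M xi k) mod int M \<noteq> 0"
    using mod_diff_nonzero r_fun_range[OF k(1)] t_range k by auto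
  then have "(s * r_fun M xi k - s * t k) mod int M \<noteq> 0"
    using s by (auto simp: algebra_simps)
  ultimately show ?thesis
    using partial_word_starts_with_a[OF k(1,2)] reduced_syls_ok[OF l(1)] l(2) by simp
qed

lemma mismatch_case:
  assumes t_range: "\<forall>i\<in>{1..n}. 0 \<le> t i \<and> t i < int M"
    and k: "1 \<le> k" "k \<le> n" "t k \<noteq> r_fun M xi k"
    and agree: "\<forall>j\<in>{1..<k}. t j = r_fun M xi j"
  shows "\<not> in_E M xi (wword n (int M) t)
       \<and> \<not> geq M xi (wword n (int M) t @ [(GE 0, True)]
                      @ wword n (- int M) (\<lambda>i. - t i) @ [(GE 0, False)]) []"
proof -
  note moves = mismatch_starts_with_a[OF t_range k agree]
  have empty: "reduced []" "\<not> starts_with_a []"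
    by (simp_all add: starts_with_a_def)
  have not_E: "\<not> in_E M xi (wword n (int M) t)"
    using moves[of 1 "[]"] empty in_E_word_act by auto
  obtain l\<^sub>2 where l\<^sub>2: "word_act (wword n (- int M) (\<lambda>i. - t i)) [] = (0, True) # l\<^sub>2"
    using moves[of "-1" "[]"] empty by auto
  define l\<^sub>1 where "l\<^sub>1 = e_act (vec 0 1) ((0, True) # l\<^sub>2)"
  have "reduced ((0, True) # l\<^sub>2)"
    using reduced_word_act[OF empty(1), of "wword n (- int M) (\<lambda>i. - t i)"] l\<^sub>2 by simp
  then have "reduced l\<^sub>1" "\<not> starts_with_a l\<^sub>1"
    unfolding l\<^sub>1_def by (rule reduced_e_act) (simp add: starts_with_a_def)
  then obtain l' where l': "word_act (wword n (int M) t) l\<^sub>1 = (0, True) # l'"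
    using moves[of 1 l\<^sub>1] by auto
  have "word_act (wword n (int M) t @ [(GE 0, True)] @ wword n (- int M) (\<lambda>i. - t i)
                  @ [(GE 0, False)]) [] = (0, True) # l'"
    using l\<^sub>2 l' by (simp add: l\<^sub>1_def)
  then show ?thesis
    using not_E geq_word_act[OF _ empty(1)] by fastforce
qed

end

theorem lemma5p4:
  fixes m n :: nat and xi t :: "nat \<Rightarrow> int"
  assumes "m > 0" and "xi \<in> madic m" and "n \<ge> 1"
    and "\<forall>i\<in>{1..n}. 0 \<le> t i \<and> t i < int m"
  shows "(in_E m xi (wword n (int m) t)
            \<longleftrightarrow> geq m xi (wword n (int m) t @ [(GE 0, True)]
                         @ wword n (- int m) (\<lambda>i. - t i) @ [(GE 0, False)]) [])
       \<and> (geq m xi (wword n (int m) t @ [(GE 0, True)]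
                         @ wword n (- int m) (\<lambda>i. - t i) @ [(GE 0, False)]) []
            \<longleftrightarrow> (\<forall>i\<in>{1..n}. t i = r_fun m xi i))"
proof -
  interpret bs_group m xi using assms(1) by unfold_locales
  show ?thesis
  proof (cases "\<forall>i\<in>{1..n}. t i = r_fun m xi i")
    case True
    then show ?thesis using matched_case by blast
  next
    case False
    then obtain k where "k \<in> {1..n}" "t k \<noteq> r_fun m xi k" "\<forall>j\<in>{1..<k}. t j = r_fun m xi j"
      using exists_least_iff[of "\<lambda>k. k \<in> {1..n} \<and> t k \<noteq> r_fun m xi k"] by force
    then show ?thesis using mismatch_case[OF assms(4)] False by auto
  qed
qed

end
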